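(* Let $1<p<\infty$. Every interval preserving operator $T$ on $\ell^p$ (with the coordinatewise order) has a non-trivial closed invariant subspace which is an ideal.
   Context: On $\ell^p$, $x\ge0$ means all coordinates are real and nonnegative; order intervals are $[0,x]=\{y:0\le y\le x\}$. A positive operator $T$ is interval preserving if $T[0,x]=[0,Tx]$ for every $x\ge0$. An ideal is a linear subspace $M$ such that $|x|\le|y|$ coordinatewise and $y\in M$ imply $x\in M$. Non-trivial means different from $\{0\}$ and $\ell^p$. *)

theory Defs
  imports "HOL-Analysis.Analysis"
begin

definition lp :: "real \<Rightarrow> (nat \<Rightarrow> complex) set" where
  "lp p = {x. summable (\<lambda>n. norm (x n) powr p)}"

definition lp_norm :: "real \<Rightarrow> (nat \<Rightarrow> complex) \<Rightarrow> real" where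
  "lp_norm p x = (\<Sum>n. norm (x n) powr p) powr (1 / p)"

definition nonneg :: "(nat \<Rightarrow> complex) \<Rightarrow> bool" where
  "nonneg x \<longleftrightarrow> (\<forall>n. Im (x n) = 0 \<and> 0 \<le> Re (x n))"

definition seq_le :: "(nat \<Rightarrow> complex) \<Rightarrow> (nat \<Rightarrow> complex) \<Rightarrow> bool" where
  "seq_le x y \<longleftrightarrow> nonneg (\<lambda>n. y n - x n)"

definition order_interval :: "real \<Rightarrow> (nat \<Rightarrow> complex) \<Rightarrow> (nat \<Rightarrow> complex) set" where
  "order_interval p x = {y \<in> lp p. seq_le (\<lambda>n. 0) y \<and> seq_le y x}"

definition lp_operator :: "real \<Rightarrow> ((nat \<Rightarrow> complex) \<Rightarrow> (nat \<Rightarrow> complex)) \<Rightarrow> bool" where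
  "lp_operator p T \<longleftrightarrow>
     (\<forall>x\<in>lp p. T x \<in> lp p) \<and>
     (\<forall>x\<in>lp p. \<forall>y\<in>lp p. T (\<lambda>n. x n + y n) = (\<lambda>n. T x n + T y n)) \<and>
     (\<forall>x\<in>lp p. \<forall>c::complex. T (\<lambda>n. c * x n) = (\<lambda>n. c * T x n)) \<and>
     (\<exists>C. \<forall>x\<in>lp p. lp_norm p (T x) \<le> C * lp_norm p x)"

definition positive_op :: "real \<Rightarrow> ((nat \<Rightarrow> complex) \<Rightarrow> (nat \<Rightarrow> complex)) \<Rightarrow> bool" where
  "positive_op p T \<longleftrightarrow> (\<forall>x\<in>lp p. nonneg x \<longrightarrow> nonneg (T x))"

definition interval_preserving :: "real \<Rightarrow> ((nat \<Rightarrow> complex) \<Rightarrow> (nat \<Rightarrow> complex)) \<Rightarrow> bool" where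
  "interval_preserving p T \<longleftrightarrow>
     positive_op p T \<and>
     (\<forall>x\<in>lp p. nonneg x \<longrightarrow> T ` order_interval p x = order_interval p (T x))"

definition lp_subspace :: "real \<Rightarrow> (nat \<Rightarrow> complex) set \<Rightarrow> bool" where
  "lp_subspace p M \<longleftrightarrow> M \<subseteq> lp p \<and> (\<lambda>n. 0) \<in> M \<and>
     (\<forall>x\<in>M. \<forall>y\<in>M. (\<lambda>n. x n + y n) \<in> M) \<and> (\<forall>x\<in>M. \<forall>c::complex. (\<lambda>n. c * x n) \<in> M)"

definition lp_ideal :: "real \<Rightarrow> (nat \<Rightarrow> complex) set \<Rightarrow> bool" where
  "lp_ideal p M \<longleftrightarrow> lp_subspace p M \<and>
     (\<forall>x y. y \<in> M \<and> (\<forall>n. norm (x n) \<le> norm (y n)) \<longrightarrow> x \<in> M)"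

definition lp_closed :: "real \<Rightarrow> (nat \<Rightarrow> complex) set \<Rightarrow> bool" where
  "lp_closed p M \<longleftrightarrow>
     (\<forall>s x. (\<forall>k. s k \<in> M) \<and> x \<in> lp p \<and> (\<lambda>k. lp_norm p (\<lambda>n. s k n - x n)) \<longlonglongrightarrow> 0 \<longrightarrow> x \<in> M)"

end

theory Submission
  imports Defs "HOL-Combinatorics.Orbits"
begin

text \<open>
  Write e_j for unit_vec j. For an interval preserving T, the order interval
  [0, T e_j] is the image of the segment [0, e_j] = {t e_j : 0 \<le> t \<le> 1}; hence
  T e_j has at most one non-zero coordinate, say at f j. By continuity T maps
  sequences supported in a set A into sequences supported in A as soon as f maps A
  into itself. Taking for A the forward orbit of 0 under f gives a closed
  T-invariant ideal; it is non-zero, and it is not everything, because an orbit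
  containing its starting point is finite.
\<close>

lemma lp_mono:
  assumes "y \<in> lp p" "0 \<le> p" "\<And>n. norm (x n) \<le> norm (y n)"
  shows "x \<in> lp p"
proof -
  have "summable (\<lambda>n. norm (y n) powr p)" using assms(1) by (simp add: lp_def)
  moreover have "\<And>n. norm (norm (x n) powr p) \<le> norm (y n) powr p"
    using assms by (simp add: powr_mono2)
  ultimately show ?thesis unfolding lp_def
    by (auto intro: summable_comparison_test[where g="\<lambda>n. norm (y n) powr p"])
qed

lemma lp_finite_support:
  assumes "finite N" "\<And>n. n \<notin> N \<Longrightarrow> x n = 0"
  shows "x \<in> lp p"
  unfolding lp_def using assms by (auto intro!: summable_finite[of N])

lemma lp_zero: "(\<lambda>n. 0) \<in> lp p"
  by (rule lp_finite_support[of "{}"]) auto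

lemma lp_scale:
  assumes "x \<in> lp p"
  shows "(\<lambda>n. c * x n) \<in> lp p"
proof -
  have "summable (\<lambda>n. norm c powr p * norm (x n) powr p)"
    using assms by (simp add: lp_def summable_mult)
  thus ?thesis unfolding lp_def by (simp add: norm_mult powr_mult)
qed

lemma lp_add:
  assumes "x \<in> lp p" "y \<in> lp p" "0 \<le> p"
  shows "(\<lambda>n. x n + y n) \<in> lp p"
proof -
  have s: "summable (\<lambda>n. 2 powr p * (norm (x n) powr p + norm (y n) powr p))"
    using assms by (simp add: lp_def summable_mult summable_add)
  have "norm (x n + y n) powr p \<le> 2 powr p * (norm (x n) powr p + norm (y n) powr p)" for n
  proof -
    let ?m = "max (norm (x n)) (norm (y n))"
    have "norm (x n + y n) \<le> 2 * ?m"
      using norm_triangle_ineq[of "x n" "y n"] by linarith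
    hence "norm (x n + y n) powr p \<le> (2 * ?m) powr p" using assms(3) by (simp add: powr_mono2)
    also have "\<dots> = 2 powr p * ?m powr p" by (simp add: powr_mult)
    also have "\<dots> \<le> 2 powr p * (norm (x n) powr p + norm (y n) powr p)"
      by (cases "norm (x n) \<le> norm (y n)") (auto simp: max_def)
    finally show ?thesis .
  qed
  hence "summable (\<lambda>n. norm (x n + y n) powr p)"
    by (intro summable_comparison_test[OF _ s]) auto
  thus ?thesis unfolding lp_def by simp
qed

lemma lp_diff:
  assumes "x \<in> lp p" "y \<in> lp p" "0 \<le> p"
  shows "(\<lambda>n. x n - y n) \<in> lp p"
  using lp_add[OF assms(1) lp_scale[OF assms(2), of "-1"] assms(3)] by simp

lemma norm_le_lp_norm:
  assumes "z \<in> lp p" "0 < p"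
  shows "norm (z m) \<le> lp_norm p z"
proof -
  have s: "summable (\<lambda>n. norm (z n) powr p)" using assms by (simp add: lp_def)
  have "norm (z m) powr p \<le> (\<Sum>n. norm (z n) powr p)"
    using sum_le_suminf[OF s, of "{m}"] by simp
  hence "(norm (z m) powr p) powr (1/p) \<le> (\<Sum>n. norm (z n) powr p) powr (1/p)"
    using assms by (simp add: powr_mono2)
  thus ?thesis using assms by (simp add: lp_norm_def powr_powr)
qed

lemma lp_norm_truncation_tendsto_zero:
  assumes "x \<in> lp p" "0 < p"
  shows "(\<lambda>N. lp_norm p (\<lambda>n. x n - (if n < N then x n else 0))) \<longlonglongrightarrow> 0"
proof -
  define f where "f n = norm (x n) powr p" for n
  have s: "summable f" using assms unfolding lp_def f_def by simp
  have eq: "(\<lambda>n. norm (x n - (if n < N then x n else 0)) powr p)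
            = (\<lambda>n. f n - (if n < N then f n else 0))" for N
    by (auto simp: f_def)
  have tail: "(\<Sum>n. f n - (if n < N then f n else 0)) = suminf f - (\<Sum>n<N. f n)" for N
  proof -
    have "summable (\<lambda>n. if n < N then f n else 0)"
      by (rule summable_finite[of "{..<N}"]) auto
    moreover have "(\<Sum>n. (if n < N then f n else 0)) = (\<Sum>n<N. f n)"
      by (subst suminf_finite[of "{..<N}"]) auto
    ultimately show ?thesis
      using suminf_diff[OF s, of "\<lambda>n. if n < N then f n else 0"] by simp
  qed
  have "(\<lambda>N. suminf f - (\<Sum>n<N. f n)) \<longlonglongrightarrow> 0"
    using tendsto_diff[OF tendsto_const summable_LIMSEQ[OF s], of "suminf f"] by simp
  moreover have "0 \<le> suminf f - (\<Sum>n<N. f n)" for N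
    using sum_le_suminf[OF s, of "{..<N}"] by (simp add: f_def)
  ultimately have "(\<lambda>N. (suminf f - (\<Sum>n<N. f n)) powr (1/p)) \<longlonglongrightarrow> 0"
    using assms(2) by (intro tendsto_zero_powrI[OF _ tendsto_const]) auto
  thus ?thesis unfolding lp_norm_def eq tail .
qed

definition unit_vec :: "nat \<Rightarrow> nat \<Rightarrow> complex" where
  "unit_vec j = (\<lambda>n. if n = j then 1 else 0)"

lemma unit_vec_lp: "unit_vec j \<in> lp p"
  by (rule lp_finite_support[of "{j}"]) (auto simp: unit_vec_def)

lemma unit_vec_nonneg: "nonneg (unit_vec j)"
  by (auto simp: nonneg_def unit_vec_def)

lemma unit_vec_neq_zero: "unit_vec j \<noteq> (\<lambda>n. 0)"
proof
  assume "unit_vec j = (\<lambda>n. 0)"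
  hence "unit_vec j j = 0" by simp
  thus False by (simp add: unit_vec_def)
qed

lemma lp_operator_add:
  "lp_operator p T \<Longrightarrow> x \<in> lp p \<Longrightarrow> y \<in> lp p \<Longrightarrow> T (\<lambda>n. x n + y n) = (\<lambda>n. T x n + T y n)"
  unfolding lp_operator_def by blast

lemma lp_operator_scale:
  "lp_operator p T \<Longrightarrow> x \<in> lp p \<Longrightarrow> T (\<lambda>n. c * x n) = (\<lambda>n. c * T x n)"
  unfolding lp_operator_def by blast

lemma lp_operator_lp: "lp_operator p T \<Longrightarrow> x \<in> lp p \<Longrightarrow> T x \<in> lp p"
  unfolding lp_operator_def by blast

lemma lp_operator_zero:
  assumes "lp_operator p T"
  shows "T (\<lambda>n. 0) = (\<lambda>n. 0)"
  using lp_operator_scale[OF assms lp_zero, of 0] by simp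

lemma lp_operator_diff:
  assumes "lp_operator p T" "x \<in> lp p" "y \<in> lp p"
  shows "T (\<lambda>n. x n - y n) = (\<lambda>n. T x n - T y n)"
  using lp_operator_add[OF assms(1,2) lp_scale[OF assms(3), of "-1"]]
    lp_operator_scale[OF assms(1,3), of "-1"] by simp

lemma lp_operator_truncation:
  assumes "lp_operator p T"
  shows "T (\<lambda>n. if n < N then x n else 0) = (\<lambda>m. \<Sum>j<N. x j * T (unit_vec j) m)"
proof (induction N)
  case 0
  then show ?case using lp_operator_zero[OF assms] by simp
next
  case (Suc N)
  have "(\<lambda>n. if n < Suc N then x n else 0) = (\<lambda>n. (if n < N then x n else 0) + x N * unit_vec N n)"
    by (auto simp: unit_vec_def fun_eq_iff less_Suc_eq)
  moreover have "(\<lambda>n. if n < N then x n else 0) \<in> lp p"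
    by (rule lp_finite_support[of "{..<N}"]) auto
  ultimately show ?case
    using Suc lp_operator_add[OF assms _ lp_scale[OF unit_vec_lp]]
      lp_operator_scale[OF assms unit_vec_lp] by simp
qed

definition coord_ideal :: "real \<Rightarrow> nat set \<Rightarrow> (nat \<Rightarrow> complex) set" where
  "coord_ideal p A = {x \<in> lp p. \<forall>n. n \<notin> A \<longrightarrow> x n = 0}"

lemma unit_vec_in_coord_ideal_iff: "unit_vec j \<in> coord_ideal p A \<longleftrightarrow> j \<in> A"
  using unit_vec_lp[of j p] by (auto simp: coord_ideal_def unit_vec_def)

lemma lp_ideal_coord_ideal:
  assumes "0 \<le> p"
  shows "lp_ideal p (coord_ideal p A)"
  unfolding lp_ideal_def lp_subspace_def
proof (intro conjI allI impI ballI)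
  show "coord_ideal p A \<subseteq> lp p" by (auto simp: coord_ideal_def)
  show "(\<lambda>n. 0) \<in> coord_ideal p A" by (simp add: coord_ideal_def lp_zero)
next
  fix x y assume "x \<in> coord_ideal p A" "y \<in> coord_ideal p A"
  thus "(\<lambda>n. x n + y n) \<in> coord_ideal p A"
    using lp_add[OF _ _ assms] by (auto simp: coord_ideal_def)
next
  fix x c assume "x \<in> coord_ideal p A"
  thus "(\<lambda>n. c * x n) \<in> coord_ideal p A" using lp_scale by (auto simp: coord_ideal_def)
next
  fix x y :: "nat \<Rightarrow> complex"
  assume h: "y \<in> coord_ideal p A \<and> (\<forall>n. norm (x n) \<le> norm (y n))"
  hence "x \<in> lp p" using lp_mono[OF _ assms] by (auto simp: coord_ideal_def)
  moreover have "x n = 0" if "n \<notin> A" for n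
    using h that by (auto simp: coord_ideal_def dest: spec[of _ n])
  ultimately show "x \<in> coord_ideal p A" by (simp add: coord_ideal_def)
qed

lemma lp_closed_coord_ideal:
  assumes "0 < p"
  shows "lp_closed p (coord_ideal p A)"
  unfolding lp_closed_def
proof (intro allI impI)
  fix s x
  assume h: "(\<forall>k. s k \<in> coord_ideal p A) \<and> x \<in> lp p \<and>
             (\<lambda>k. lp_norm p (\<lambda>n. s k n - x n)) \<longlonglongrightarrow> 0"
  have "x n = 0" if n: "n \<notin> A" for n
  proof -
    have bound: "norm (x n) \<le> lp_norm p (\<lambda>i. s k i - x i)" for k
    proof -
      have "s k \<in> lp p" "s k n = 0" using h n by (auto simp: coord_ideal_def)
      moreover from this have "(\<lambda>i. s k i - x i) \<in> lp p"
        using lp_diff h assms by simp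
      ultimately show ?thesis using norm_le_lp_norm[OF _ assms, of "\<lambda>i. s k i - x i" n] by simp
    qed
    have "norm (x n) \<le> 0"
      by (rule tendsto_le[OF trivial_limit_sequentially _ tendsto_const]) (use h bound in auto)
    thus ?thesis by simp
  qed
  thus "x \<in> coord_ideal p A" using h by (simp add: coord_ideal_def)
qed

lemma coord_ideal_invariant:
  assumes T: "lp_operator p T" and p: "0 < p"
    and A: "\<And>j m. j \<in> A \<Longrightarrow> T (unit_vec j) m \<noteq> 0 \<Longrightarrow> m \<in> A"
    and x: "x \<in> coord_ideal p A"
  shows "T x \<in> coord_ideal p A"
proof -
  obtain C where C: "\<And>z. z \<in> lp p \<Longrightarrow> lp_norm p (T z) \<le> C * lp_norm p z"
    using T unfolding lp_operator_def by blast
  have xl: "x \<in> lp p" using x by (simp add: coord_ideal_def)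
  define t where "t N = (\<lambda>n. if n < N then x n else 0)" for N
  have tl: "t N \<in> lp p" for N unfolding t_def by (rule lp_finite_support[of "{..<N}"]) auto
  have dl: "(\<lambda>n. x n - t N n) \<in> lp p" for N
    using lp_diff[OF xl tl] p by simp
  have "T x m = 0" if m: "m \<notin> A" for m
  proof -
    have vanish: "x j * T (unit_vec j) m = 0" for j
      using x A m by (cases "j \<in> A") (auto simp: coord_ideal_def)
    have t0: "T (t N) m = 0" for N
      unfolding t_def lp_operator_truncation[OF T] by (simp add: vanish)
    have bound: "norm (T x m) \<le> C * lp_norm p (\<lambda>n. x n - t N n)" for N
    proof -
      have "norm (T x m) = norm (T (\<lambda>n. x n - t N n) m)"
        using lp_operator_diff[OF T xl tl] t0 by simp
      also have "\<dots> \<le> lp_norm p (T (\<lambda>n. x n - t N n))"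
        using norm_le_lp_norm[OF lp_operator_lp[OF T dl] p] .
      also have "\<dots> \<le> C * lp_norm p (\<lambda>n. x n - t N n)" by (rule C[OF dl])
      finally show ?thesis .
    qed
    have "(\<lambda>N. C * lp_norm p (\<lambda>n. x n - t N n)) \<longlonglongrightarrow> 0"
      using tendsto_mult_right_zero[OF lp_norm_truncation_tendsto_zero[OF xl p], of C]
      unfolding t_def by simp
    hence "norm (T x m) \<le> 0"
      by (rule tendsto_le[OF trivial_limit_sequentially _ tendsto_const]) (use bound in auto)
    thus ?thesis by simp
  qed
  thus ?thesis using lp_operator_lp[OF T xl] by (simp add: coord_ideal_def)
qed

text \<open>
  The truncation of T e_j to its m-th coordinate lies in [0, T e_j], so it is
  T (t e_j) for some real t; comparing the m'-th coordinates forces t = 0.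
\<close>

lemma interval_preserving_unit_vec_single_support:
  assumes T: "lp_operator p T" and ip: "interval_preserving p T"
    and m: "T (unit_vec j) m \<noteq> 0" and m': "T (unit_vec j) m' \<noteq> 0"
  shows "m = m'"
proof (rule ccontr)
  assume "m \<noteq> m'"
  let ?u = "T (unit_vec j)"
  have "nonneg ?u"
    using ip unit_vec_lp unit_vec_nonneg by (auto simp: interval_preserving_def positive_op_def)
  define y where "y = (\<lambda>n. if n = m then ?u m else 0)"
  have "y \<in> lp p" unfolding y_def by (rule lp_finite_support[of "{m}"]) auto
  with \<open>nonneg ?u\<close> have "y \<in> order_interval p ?u"
    by (auto simp: order_interval_def seq_le_def nonneg_def y_def)
  also have "order_interval p ?u = T ` order_interval p (unit_vec j)"
    using ip unit_vec_lp unit_vec_nonneg by (auto simp: interval_preserving_def)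
  finally obtain w where w: "w \<in> order_interval p (unit_vec j)" "y = T w" by auto
  have w_nonneg: "nonneg w" "nonneg (\<lambda>n. unit_vec j n - w n)"
    using w(1) by (auto simp: order_interval_def seq_le_def)
  define t where "t = Re (w j)"
  have "w = (\<lambda>n. complex_of_real t * unit_vec j n)"
  proof
    fix n
    show "w n = complex_of_real t * unit_vec j n"
    proof (cases "n = j")
      case True
      thus ?thesis using w_nonneg(1) by (auto simp: nonneg_def t_def unit_vec_def complex_eq_iff)
    next
      case False
      have "Im (w n) = 0" "0 \<le> Re (w n)" "0 \<le> - Re (w n)"
        using w_nonneg False by (auto simp: nonneg_def unit_vec_def dest: spec[of _ n])
      thus ?thesis using False by (auto simp: unit_vec_def complex_eq_iff)
    qed
  qed
  hence Tw: "T w = (\<lambda>n. complex_of_real t * ?u n)"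
    using lp_operator_scale[OF T unit_vec_lp] by simp
  have "y m' = 0" using \<open>m \<noteq> m'\<close> by (simp add: y_def)
  hence "t = 0" using w(2) Tw m' by simp
  hence "y m = 0" using w(2) Tw by simp
  thus False using m by (simp add: y_def)
qed

lemma interval_preserving_obtain_support_map:
  assumes "lp_operator p T" "interval_preserving p T"
  obtains f where "\<And>j m. T (unit_vec j) m \<noteq> 0 \<Longrightarrow> m = f j"
proof
  fix j m
  assume "T (unit_vec j) m \<noteq> 0"
  moreover from this have "T (unit_vec j) (SOME m. T (unit_vec j) m \<noteq> 0) \<noteq> 0"
    by (rule someI)
  ultimately show "m = (SOME m. T (unit_vec j) m \<noteq> 0)"
    by (rule interval_preserving_unit_vec_single_support[OF assms])
qed

lemma orbit_nat_neq_UNIV: "orbit (f :: nat \<Rightarrow> nat) x \<noteq> UNIV"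
  using finite_orbit[of x f] by auto

theorem corollary3p7:
  fixes p :: real and T :: "(nat \<Rightarrow> complex) \<Rightarrow> (nat \<Rightarrow> complex)"
  assumes "1 < p"
    and "lp_operator p T"
    and "interval_preserving p T"
  shows "\<exists>M. lp_ideal p M \<and> lp_closed p M \<and> (\<forall>x\<in>M. T x \<in> M) \<and>
             M \<noteq> {\<lambda>n. 0} \<and> M \<noteq> lp p"
proof -
  have p: "0 < p" using assms(1) by simp
  obtain f where f: "\<And>j m. T (unit_vec j) m \<noteq> 0 \<Longrightarrow> m = f j"
    using interval_preserving_obtain_support_map[OF assms(2,3)] by blast
  let ?M = "coord_ideal p (orbit f 0)"
  have "lp_ideal p ?M" using lp_ideal_coord_ideal p by simp
  moreover have "lp_closed p ?M" using lp_closed_coord_ideal[OF p] .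
  moreover have "T x \<in> ?M" if "x \<in> ?M" for x
  proof (rule coord_ideal_invariant[OF assms(2) p _ that])
    fix j m
    assume "j \<in> orbit f 0" "T (unit_vec j) m \<noteq> 0"
    thus "m \<in> orbit f 0" using orbit.step f by metis
  qed
  moreover have "unit_vec (f 0) \<in> ?M"
    using orbit.base unit_vec_in_coord_ideal_iff by simp
  hence "?M \<noteq> {\<lambda>n. 0}" using unit_vec_neq_zero by auto
  moreover obtain b where "b \<notin> orbit f 0" using orbit_nat_neq_UNIV[of f 0] by blast
  hence "?M \<noteq> lp p"
    using unit_vec_in_coord_ideal_iff[of b p] unit_vec_lp[of b p] by auto
  ultimately show ?thesis by blast
qed

end
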